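(* Let $H\in\mathbb{C}^{n\times n}$ be Hermitian with eigenvalues $\lambda_1(H)\ge\lambda_2(H)\ge\cdots\ge\lambda_n(H)$ (counted with multiplicity), let $1\le k<n$, and suppose $\lambda_k(H)-\lambda_{k+1}(H)>0$. Let $P_*\in\mathbb{C}^{n\times k}$ with $P_*^{\mathrm{H}}P_*=I_k$ be such that its column space ${\cal R}(P_* )$ is the invariant subspace of $H$ associated with its $k$ largest eigenvalues $\lambda_1(H),\dots,\lambda_k(H)$. Given any $P\in\mathbb{C}^{n\times k}$ with $P^{\mathrm{H}}P=I_k$, let $$\eta=\operatorname{tr}(P_*^{\mathrm{H}}HP_* )-\operatorname{tr}(P^{\mathrm{H}}HP),\qquad \epsilon=\sqrt{\frac{\eta}{\lambda_k(H)-\lambda_{k+1}(H)}}.$$ Then $$\frac{\|HP-P(P^{\mathrm{H}}HP)\|_{\mathrm{F}}}{\lambda_1(H)-\lambda_n(H)}\le\|\sin\Theta({\cal R}(P),{\cal R}(P_* ))\|_{\mathrm{F}}\le\epsilon.$$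
   Context: For a matrix $X$, $X^{\mathrm{H}}$ is its conjugate transpose, ${\cal R}(X)$ its column space, $\|X\|_{\mathrm{F}}=\sqrt{\operatorname{tr}(X^{\mathrm{H}}X)}$ the Frobenius norm. For two $k$-dimensional subspaces ${\cal X}={\cal R}(X)$, ${\cal Y}={\cal R}(Y)$ of $\mathbb{C}^n$ with $X,Y\in\mathbb{C}^{n\times k}$ having orthonormal columns, the canonical angles are $\theta_i=\arccos\sigma_i(X^{\mathrm{H}}Y)\in[0,\pi/2]$, $i=1,\dots,k$, where $\sigma_1(X^{\mathrm{H}}Y)\ge\cdots\ge\sigma_k(X^{\mathrm{H}}Y)$ are the singular values; $\Theta({\cal X},{\cal Y})=\operatorname{diag}(\theta_1,\dots,\theta_k)$ and $\|\sin\Theta({\cal X},{\cal Y})\|_{\mathrm{F}}=\big(\sum_{i=1}^k\sin^2\theta_i\big)^{1/2}$. *)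

theory Defs
  imports "Jordan_Normal_Form.Schur_Decomposition" "Jordan_Normal_Form.Char_Poly"
    "HOL-Computational_Algebra.Polynomial"
begin

text \<open>Conjugate transpose X^H is the library's mat_adjoint.\<close>

definition mat_trace :: "complex mat \<Rightarrow> complex" where
  "mat_trace A = (\<Sum>i<dim_row A. A $$ (i, i))"

definition frob_norm :: "complex mat \<Rightarrow> real" where
  "frob_norm X = sqrt (\<Sum>i<dim_row X. \<Sum>j<dim_col X. (cmod (X $$ (i, j)))\<^sup>2)"

text \<open>Eigenvalues (roots of the characteristic polynomial, with multiplicity)
  of a Hermitian matrix, as reals, in non-increasing order:
  eig_desc H ! (i-1) is lambda_i(H).\<close>
definition eig_desc :: "complex mat \<Rightarrow> real list" where
  "eig_desc H = rev (sorted_list_of_multiset (image_mset Re (proots (char_poly H))))"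

definition sing_vals :: "complex mat \<Rightarrow> real list" where
  "sing_vals M = map sqrt (eig_desc (mat_adjoint M * M))"

text \<open>|| sin Theta(R(X), R(Y)) ||_F for X, Y with orthonormal columns:
  canonical angles theta_i = arccos sigma_i(X^H Y).\<close>
definition sin_theta_F :: "complex mat \<Rightarrow> complex mat \<Rightarrow> real" where
  "sin_theta_F X Y = sqrt (\<Sum>\<sigma>\<leftarrow>sing_vals (mat_adjoint X * Y). (sin (arccos \<sigma>))\<^sup>2)"

end

theory Submission
  imports Defs "HOL-Analysis.L2_Norm"
begin

(*
  Write H = U diag(l_1, ..., l_n) U^H with U unitary and l_1 >= ... >= l_n.  The restriction of H to
  R(Ps) has spectrum l_1, ..., l_k and l_k > l_(k+1), so every eigenvector u_i with i > k is orthogonal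
  to R(Ps): Ps Ps^H = U J U^H with J = diag(1, ..., 1, 0, ..., 0) of rank k.

  For P with orthonormal columns let r_i = |P^H u_i|^2.  Then 0 <= r_i <= 1, sum r_i = k and
  tr(P^H H P) = sum l_i r_i, while sum_(i>k) r_i = k - |P^H Ps|_F^2 = |sin Theta|_F^2, the cosines of the
  canonical angles being the singular values of P^H Ps.  Hence
    eta = sum_(i<=k) l_i (1 - r_i) - sum_(i>k) l_i r_i >= (l_k - l_(k+1)) |sin Theta|_F^2.
  For the residual, (I - P P^H) P = 0 gives H P - P (P^H H P) = (I - P P^H) (H - l_k I) P.  Splitting
  H - l_k I into its parts on the first k and on the remaining eigenvectors bounds the two pieces by
  (l_1 - l_k) |sin Theta|_F and (l_k - l_n) |sin Theta|_F.
*)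

notation mat_adjoint (\<open>(_\<^sup>H)\<close> [1000])

section \<open>Adjoints and isometries\<close>

lemma mat_adjoint_dim [simp]:
  fixes A :: "complex mat"
  shows "dim_row (A\<^sup>H) = dim_col A" "dim_col (A\<^sup>H) = dim_row A"
  unfolding mat_adjoint_def by auto

lemma mat_adjoint_carrier [simp]: "(A :: complex mat) \<in> carrier_mat m n \<Longrightarrow> A\<^sup>H \<in> carrier_mat n m"
  by (metis carrier_matD carrier_matI mat_adjoint_dim)

lemma mat_adjoint_index [simp]:
  "i < dim_col A \<Longrightarrow> j < dim_row A \<Longrightarrow> A\<^sup>H $$ (i, j) = cnj (A $$ (j, i))"
  unfolding mat_adjoint_def by (simp add: mat_of_rows_index)

lemma mat_adjoint_adjoint [simp]: "(A :: complex mat)\<^sup>H\<^sup>H = A"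
  by (rule eq_matI) auto

lemma mat_adjoint_mult:
  "dim_col A = dim_row (B :: complex mat) \<Longrightarrow> (A * B)\<^sup>H = B\<^sup>H * A\<^sup>H"
  by (rule eq_matI)
    (auto simp: scalar_prod_def mult.commute intro!: sum.cong)

lemma mat_adjoint_minus:
  "A \<in> carrier_mat m n \<Longrightarrow> (B :: complex mat) \<in> carrier_mat m n \<Longrightarrow> (A - B)\<^sup>H = A\<^sup>H - B\<^sup>H"
  by (rule eq_matI) auto

lemma mat_adjoint_one [simp]: "(1\<^sub>m n :: complex mat)\<^sup>H = 1\<^sub>m n"
  by (rule eq_matI) auto

lemma mat_adjoint_zero [simp]: "(0\<^sub>m n m :: complex mat)\<^sup>H = 0\<^sub>m m n"
  by (rule eq_matI) auto

lemma mat_adjoint_mat_diag: "(mat_diag n f)\<^sup>H = mat_diag n (\<lambda>i. cnj (f i))"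
  by (rule eq_matI) (auto simp: mat_diag_def)

lemma mat_diag_dims [simp]: "dim_row (mat_diag n f) = n" "dim_col (mat_diag n f) = n"
  by (simp_all add: mat_diag_def)

lemma assoc_mult_mat_dim:
  "dim_col A = dim_row B \<Longrightarrow> dim_col B = dim_row C \<Longrightarrow> A * B * C = A * (B * C)"
  by (rule assoc_mult_mat[of A "dim_row A" "dim_col A" B "dim_col B" C "dim_col C"])
    (auto intro: carrier_matI)

definition isometry_mat :: "nat \<Rightarrow> nat \<Rightarrow> complex mat \<Rightarrow> bool" where
  "isometry_mat n k P \<longleftrightarrow> P \<in> carrier_mat n k \<and> P\<^sup>H * P = 1\<^sub>m k"

lemma isometry_matD:
  assumes "isometry_mat n k P"
  shows "P \<in> carrier_mat n k" "dim_row P = n" "dim_col P = k" "P\<^sup>H * P = 1\<^sub>m k"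
  using assms carrier_matD[of P n k] unfolding isometry_mat_def by blast+

lemma isometry_mat_cancel_left:
  assumes "isometry_mat n k P" "dim_row X = k"
  shows "P\<^sup>H * (P * X) = X"
  using assms by (subst assoc_mult_mat_dim[symmetric]) (auto simp: isometry_matD)

lemma unitary_mat_mult_adjoint:
  assumes "isometry_mat n n U"
  shows "U * U\<^sup>H = 1\<^sub>m n"
  using assms mat_mult_left_right_inverse[of "U\<^sup>H" n U] by (simp add: isometry_mat_def)

lemma unitary_mat_cancel_left:
  assumes "isometry_mat n n U" "dim_row X = n"
  shows "U * (U\<^sup>H * X) = X"
  using assms
  by (subst assoc_mult_mat_dim[symmetric]) (auto simp: isometry_matD unitary_mat_mult_adjoint)

lemma isometry_mat_adjoint:
  "isometry_mat n n U \<Longrightarrow> isometry_mat n n (U\<^sup>H)"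
  by (simp add: isometry_mat_def unitary_mat_mult_adjoint)

lemma isometry_mat_mult:
  assumes P: "isometry_mat n k P" and Q: "isometry_mat k m Q"
  shows "isometry_mat n m (P * Q)"
proof -
  note dims = isometry_matD(2,3)[OF P] isometry_matD(2,3)[OF Q]
  have "(P * Q)\<^sup>H * (P * Q) = Q\<^sup>H * (P\<^sup>H * (P * Q))"
    using dims by (simp add: mat_adjoint_mult assoc_mult_mat_dim)
  also have "\<dots> = 1\<^sub>m m"
    using dims by (simp add: isometry_mat_cancel_left[OF P] isometry_matD(4)[OF Q])
  finally show ?thesis
    unfolding isometry_mat_def
    using mult_carrier_mat[OF isometry_matD(1)[OF P] isometry_matD(1)[OF Q]] by blast
qed

lemma unitary_conj_mult:
  assumes W: "isometry_mat n n W" and A: "A \<in> carrier_mat n n"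
  shows "W * (W\<^sup>H * A * W) = A * W"
proof -
  have Wc: "W \<in> carrier_mat n n" using isometry_matD[OF W] by simp
  have "W * (W\<^sup>H * A * W) = W * (W\<^sup>H * (A * W))"
    using A Wc by (simp add: assoc_mult_mat_dim)
  also have "\<dots> = A * W"
    using A Wc by (simp add: unitary_mat_cancel_left[OF W])
  finally show ?thesis .
qed

lemma similar_mat_unitary_conj:
  assumes W: "isometry_mat n n W" and A: "A \<in> carrier_mat n n"
  shows "similar_mat A (W\<^sup>H * A * W)"
proof -
  have Wc: "W \<in> carrier_mat n n" using isometry_matD[OF W] by simp
  have "W * (W\<^sup>H * A * W) * W\<^sup>H = A * W * W\<^sup>H"
    by (simp only: unitary_conj_mult[OF W A])
  also have "\<dots> = A"
    using A Wc by (simp add: assoc_mult_mat_dim unitary_mat_mult_adjoint[OF W])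
  finally have "A = W * (W\<^sup>H * A * W) * W\<^sup>H" ..
  then show ?thesis
    using A Wc isometry_matD(4)[OF W] unitary_mat_mult_adjoint[OF W]
    by (intro similar_matI[of A "W\<^sup>H * A * W" W "W\<^sup>H" n]) auto
qed

section \<open>The Frobenius norm\<close>

definition frob_sq :: "complex mat \<Rightarrow> real" where
  "frob_sq X = (\<Sum>i<dim_row X. \<Sum>j<dim_col X. (cmod (X $$ (i, j)))\<^sup>2)"

definition row_norm_sq :: "complex mat \<Rightarrow> nat \<Rightarrow> real" where
  "row_norm_sq X i = (\<Sum>j<dim_col X. (cmod (X $$ (i, j)))\<^sup>2)"

definition col_norm_sq :: "complex mat \<Rightarrow> nat \<Rightarrow> real" where
  "col_norm_sq X j = (\<Sum>i<dim_row X. (cmod (X $$ (i, j)))\<^sup>2)"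

lemma frob_norm_eq_sqrt_frob_sq: "frob_norm X = sqrt (frob_sq X)"
  unfolding frob_norm_def frob_sq_def ..

lemma frob_sq_eq_sum_rows: "frob_sq X = (\<Sum>i<dim_row X. row_norm_sq X i)"
  unfolding frob_sq_def row_norm_sq_def ..

lemma frob_sq_eq_sum_cols: "frob_sq X = (\<Sum>j<dim_col X. col_norm_sq X j)"
  unfolding frob_sq_def col_norm_sq_def by (rule sum.swap)

lemma row_norm_sq_nonneg: "0 \<le> row_norm_sq X i"
  unfolding row_norm_sq_def by (auto intro: sum_nonneg)

lemma col_norm_sq_nonneg: "0 \<le> col_norm_sq X j"
  unfolding col_norm_sq_def by (auto intro: sum_nonneg)

lemma frob_sq_nonneg: "0 \<le> frob_sq X"
  unfolding frob_sq_def by (auto intro!: sum_nonneg)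

lemma col_norm_sq_adjoint: "i < dim_row X \<Longrightarrow> col_norm_sq (X\<^sup>H) i = row_norm_sq X i"
  unfolding row_norm_sq_def col_norm_sq_def by simp

lemma frob_sq_adjoint [simp]: "frob_sq (X\<^sup>H) = frob_sq X"
  unfolding frob_sq_def by (simp, subst sum.swap) simp

lemma gram_diag_eq_col_norm_sq:
  "j < dim_col X \<Longrightarrow> (X\<^sup>H * X) $$ (j, j) = complex_of_real (col_norm_sq X j)"
  unfolding col_norm_sq_def
  by (simp add: scalar_prod_def lessThan_atLeast0 complex_norm_square mult.commute del: of_real_power)

lemma gram_diag_eq_row_norm_sq:
  "i < dim_row X \<Longrightarrow> (X * X\<^sup>H) $$ (i, i) = complex_of_real (row_norm_sq X i)"
  using gram_diag_eq_col_norm_sq[of i "X\<^sup>H"] by (simp add: col_norm_sq_adjoint)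

lemma col_norm_sq_isometry:
  "isometry_mat n k P \<Longrightarrow> j < k \<Longrightarrow> col_norm_sq P j = 1"
  using gram_diag_eq_col_norm_sq[of j P] by (simp add: isometry_matD)

lemma frob_sq_isometry: "isometry_mat n k P \<Longrightarrow> frob_sq P = real k"
  by (simp add: frob_sq_eq_sum_cols col_norm_sq_isometry isometry_matD)

lemma frob_sq_isometry_mult:
  assumes "isometry_mat n k Q" "dim_row X = k"
  shows "frob_sq (Q * X) = frob_sq X"
proof -
  have "(Q * X)\<^sup>H * (Q * X) = X\<^sup>H * X"
    using assms
    by (simp add: isometry_matD mat_adjoint_mult assoc_mult_mat_dim isometry_mat_cancel_left)
  then have "col_norm_sq (Q * X) j = col_norm_sq X j" if "j < dim_col X" for j
    using that gram_diag_eq_col_norm_sq[of j "Q * X"] gram_diag_eq_col_norm_sq[of j X] by simp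
  then show ?thesis
    unfolding frob_sq_eq_sum_cols by (intro sum.cong) auto
qed

lemma frob_sq_mult_unitary:
  assumes "isometry_mat m m V" "dim_col X = m"
  shows "frob_sq (X * V) = frob_sq X"
proof -
  have "(X * V)\<^sup>H = V\<^sup>H * X\<^sup>H"
    using assms by (simp add: mat_adjoint_mult isometry_matD)
  then have "frob_sq (X * V) = frob_sq (V\<^sup>H * X\<^sup>H)"
    by (metis frob_sq_adjoint)
  also have "\<dots> = frob_sq X"
    using frob_sq_isometry_mult[OF isometry_mat_adjoint[OF assms(1)], of "X\<^sup>H"] assms by simp
  finally show ?thesis .
qed

lemma frob_sq_mat_diag_mult:
  assumes "X \<in> carrier_mat n m"
  shows "frob_sq (mat_diag n f * X) = (\<Sum>i<n. (cmod (f i))\<^sup>2 * row_norm_sq X i)"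
  unfolding mat_diag_mult_left[OF assms] frob_sq_def row_norm_sq_def using assms
  by (auto simp: norm_mult power_mult_distrib sum_distrib_left intro!: sum.cong)

lemma complement_projection_adjoint:
  fixes P :: "complex mat"
  assumes "P \<in> carrier_mat n k"
  shows "(1\<^sub>m n - P * P\<^sup>H)\<^sup>H = 1\<^sub>m n - P * P\<^sup>H"
  using assms mat_adjoint_minus[of "1\<^sub>m n" n n "P * P\<^sup>H"] by (simp add: mat_adjoint_mult)

lemma complement_projection_mult_self:
  assumes "isometry_mat n k P"
  shows "(1\<^sub>m n - P * P\<^sup>H) * P = 0\<^sub>m n k"
proof -
  have Pc: "P \<in> carrier_mat n k" using isometry_matD[OF assms] by simp
  have "(1\<^sub>m n - P * P\<^sup>H) * P = P - P * (P\<^sup>H * P)"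
    using minus_mult_distrib_mat[OF one_carrier_mat _ Pc, of "P * P\<^sup>H"] Pc
    by (simp add: assoc_mult_mat_dim)
  then show ?thesis
    using Pc by (simp add: isometry_matD(4)[OF assms])
qed

lemma complement_projection_gram:
  assumes P: "isometry_mat n k P" and X: "X \<in> carrier_mat n m"
  shows "((1\<^sub>m n - P * P\<^sup>H) * X)\<^sup>H * ((1\<^sub>m n - P * P\<^sup>H) * X)
    = X\<^sup>H * X - (P\<^sup>H * X)\<^sup>H * (P\<^sup>H * X)"
proof -
  have Pc: "P \<in> carrier_mat n k" and PP: "P\<^sup>H * P = 1\<^sub>m k"
    using isometry_matD[OF P] by auto
  define G where "G = 1\<^sub>m n - P * P\<^sup>H"
  have PPH: "P * P\<^sup>H \<in> carrier_mat n n" using Pc by simp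
  have G: "G \<in> carrier_mat n n" unfolding G_def using PPH by (rule minus_carrier_mat)
  have G_mult: "G * Y = Y - P * P\<^sup>H * Y" if "Y \<in> carrier_mat n p" for Y p
    using minus_mult_distrib_mat[OF one_carrier_mat PPH that] that unfolding G_def by simp
  have G_herm: "G\<^sup>H = G"
    unfolding G_def by (rule complement_projection_adjoint[OF Pc])
  have "P * P\<^sup>H * (P * P\<^sup>H) = P * (P\<^sup>H * P) * P\<^sup>H"
    using Pc by (simp add: assoc_mult_mat_dim)
  then have "P * P\<^sup>H * (P * P\<^sup>H) = P * P\<^sup>H"
    using Pc by (simp add: PP)
  then have "P * P\<^sup>H * G = 0\<^sub>m n n"
    unfolding G_def using PPH Pc
    by (simp add: mult_minus_distrib_mat[OF PPH one_carrier_mat PPH] minus_r_inv_mat)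
  moreover have "G - 0\<^sub>m n n = G"
    using G by (intro eq_matI) auto
  ultimately have G_idem: "G * G = G"
    using G_mult[OF G] by simp
  have "(G * X)\<^sup>H * (G * X) = X\<^sup>H * (G * G * X)"
    using G X by (simp add: mat_adjoint_mult G_herm assoc_mult_mat_dim)
  also have "\<dots> = X\<^sup>H * X - X\<^sup>H * (P * P\<^sup>H * X)"
    unfolding G_idem G_mult[OF X] using X PPH by (simp add: mult_minus_distrib_mat[of _ m n])
  also have "X\<^sup>H * (P * P\<^sup>H * X) = (P\<^sup>H * X)\<^sup>H * (P\<^sup>H * X)"
    using Pc X by (simp add: mat_adjoint_mult assoc_mult_mat_dim)
  finally show ?thesis unfolding G_def .
qed

lemma col_norm_sq_complement:
  assumes P: "isometry_mat n k P" and X: "X \<in> carrier_mat n m" and j: "j < m"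
  shows "col_norm_sq ((1\<^sub>m n - P * P\<^sup>H) * X) j + col_norm_sq (P\<^sup>H * X) j = col_norm_sq X j"
proof -
  let ?GX = "(1\<^sub>m n - P * P\<^sup>H) * X" and ?Y = "P\<^sup>H * X"
  have dims: "dim_row P = n" "dim_col P = k" "dim_row X = n" "dim_col X = m"
    using isometry_matD[OF P] X by auto
  have "complex_of_real (col_norm_sq ?GX j) = (?GX\<^sup>H * ?GX) $$ (j, j)"
    using j dims by (simp only: gram_diag_eq_col_norm_sq index_mult_mat(3) index_minus_mat(3))
  also have "\<dots> = (X\<^sup>H * X) $$ (j, j) - (?Y\<^sup>H * ?Y) $$ (j, j)"
    unfolding complement_projection_gram[OF P X] using j dims by simp
  also have "\<dots> = complex_of_real (col_norm_sq X j) - complex_of_real (col_norm_sq ?Y j)"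
    using j dims by (simp only: gram_diag_eq_col_norm_sq index_mult_mat(3) mat_adjoint_dim)
  finally have "col_norm_sq ?GX j = col_norm_sq X j - col_norm_sq ?Y j"
    by (metis of_real_diff of_real_eq_iff)
  then show ?thesis
    by simp
qed

lemma frob_sq_complement:
  assumes P: "isometry_mat n k P" and X: "X \<in> carrier_mat n m"
  shows "frob_sq ((1\<^sub>m n - P * P\<^sup>H) * X) + frob_sq (P\<^sup>H * X) = frob_sq X"
  using col_norm_sq_complement[OF P X] X isometry_matD[OF P]
  by (simp add: frob_sq_eq_sum_cols sum.distrib[symmetric])

lemma col_norm_sq_adjoint_mult_isometry_le_1:
  assumes P: "isometry_mat n k P" and Q: "isometry_mat n m Q" and j: "j < m"
  shows "col_norm_sq (P\<^sup>H * Q) j \<le> 1"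
  using col_norm_sq_complement[OF P isometry_matD(1)[OF Q] j] col_norm_sq_isometry[OF Q j]
    col_norm_sq_nonneg[of "(1\<^sub>m n - P * P\<^sup>H) * Q" j]
  by linarith

lemma frob_norm_triangle:
  assumes "A \<in> carrier_mat m n" "B \<in> carrier_mat m n"
  shows "frob_norm (A + B) \<le> frob_norm A + frob_norm B"
proof -
  have L2: "frob_norm X = L2_set (\<lambda>(i, j). cmod (X $$ (i, j))) ({..<m} \<times> {..<n})"
    if "X \<in> carrier_mat m n" for X
    using that unfolding frob_norm_def L2_set_def by (simp add: sum.cartesian_product case_prod_beta)
  have AB: "A + B \<in> carrier_mat m n" using assms by simp
  have "frob_norm (A + B)
      \<le> L2_set (\<lambda>x. (\<lambda>(i, j). cmod (A $$ (i, j))) x + (\<lambda>(i, j). cmod (B $$ (i, j))) x) ({..<m} \<times> {..<n})"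
    unfolding L2[OF AB]
    by (rule L2_set_mono) (use assms in \<open>auto simp: norm_triangle_ineq\<close>)
  also have "\<dots> \<le> frob_norm A + frob_norm B"
    unfolding L2[OF assms(1)] L2[OF assms(2)] by (rule L2_set_triangle_ineq)
  finally show ?thesis .
qed

lemma mat_trace_adjoint_mat_diag:
  assumes X: "X \<in> carrier_mat n m"
  shows "mat_trace (X\<^sup>H * mat_diag n f * X) = (\<Sum>i<n. f i * complex_of_real (row_norm_sq X i))"
proof -
  have "X\<^sup>H * mat_diag n f * X = X\<^sup>H * mat n m (\<lambda>(i, j). f i * X $$ (i, j))"
    using X by (simp add: assoc_mult_mat_dim mat_diag_mult_left)
  then have "mat_trace (X\<^sup>H * mat_diag n f * X)
      = (\<Sum>j<m. \<Sum>i<n. f i * complex_of_real ((cmod (X $$ (i, j)))\<^sup>2))"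
    unfolding mat_trace_def using X
    by (simp add: scalar_prod_def lessThan_atLeast0 complex_norm_square ac_simps del: of_real_power)
  then show ?thesis
    unfolding row_norm_sq_def using X by (simp add: sum_distrib_left sum.swap[of _ "{..<m}"])
qed

lemma frob_sq_mat_diag_mult_le:
  assumes X: "X \<in> carrier_mat n m" and f: "\<And>i. i < n \<Longrightarrow> cmod (f i) \<le> a i"
  shows "frob_sq (mat_diag n f * X) \<le> (\<Sum>i<n. (a i)\<^sup>2 * row_norm_sq X i)"
  unfolding frob_sq_mat_diag_mult[OF X]
  by (intro sum_mono mult_right_mono power_mono) (simp_all add: f row_norm_sq_nonneg)

lemma frob_sq_complement_le:
  assumes "isometry_mat n k P" "X \<in> carrier_mat n m"
  shows "frob_sq ((1\<^sub>m n - P * P\<^sup>H) * X) \<le> frob_sq X" "frob_sq (P\<^sup>H * X) \<le> frob_sq X"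
  using frob_sq_complement[OF assms] frob_sq_nonneg[of "(1\<^sub>m n - P * P\<^sup>H) * X"]
    frob_sq_nonneg[of "P\<^sup>H * X"]
  by linarith+

lemma frob_norm_le_of_frob_sq_le:
  "frob_sq X \<le> a\<^sup>2 * s \<Longrightarrow> 0 \<le> a \<Longrightarrow> frob_norm X \<le> a * sqrt s"
proof -
  assume "frob_sq X \<le> a\<^sup>2 * s" "0 \<le> a"
  then have "sqrt (frob_sq X) \<le> sqrt (a\<^sup>2 * s)"
    using real_sqrt_le_mono by blast
  then show ?thesis
    using \<open>0 \<le> a\<close> by (simp add: frob_norm_eq_sqrt_frob_sq real_sqrt_mult)
qed

section \<open>The spectral theorem for Hermitian matrices\<close>

lemma isometry_mat_normalized_cols:
  assumes ws: "set ws \<subseteq> carrier_vec n" "corthogonal ws" "length ws = k"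
  defines "r \<equiv> \<lambda>j. sqrt (Re (ws ! j \<bullet>c ws ! j))"
  shows "isometry_mat n k (mat n k (\<lambda>(l, j). ws ! j $ l / complex_of_real (r j)))"
proof -
  let ?W = "mat n k (\<lambda>(l, j). ws ! j $ l / complex_of_real (r j))"
  have wsj: "ws ! j \<in> carrier_vec n" if "j < k" for j
    using ws that by auto
  have self: "ws ! j \<bullet>c ws ! j = complex_of_real ((r j)\<^sup>2) \<and> r j \<noteq> 0" if j: "j < k" for j
  proof -
    have "ws ! j \<bullet>c ws ! j \<noteq> 0"
      using corthogonalD[OF ws(2), of j j] j ws(3) by auto
    moreover have "ws ! j \<bullet>c ws ! j \<ge> 0" by (rule conjugate_square_ge_0_vec)
    ultimately have "Im (ws ! j \<bullet>c ws ! j) = 0" "Re (ws ! j \<bullet>c ws ! j) > 0"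
      by (auto simp: less_eq_complex_def complex_eq_iff)
    then show ?thesis
      unfolding r_def by (simp add: complex_eq_iff)
  qed
  have "(?W\<^sup>H * ?W) $$ (i, j) = 1\<^sub>m k $$ (i, j)" if i: "i < k" and j: "j < k" for i j
  proof -
    have "(?W\<^sup>H * ?W) $$ (i, j)
        = (\<Sum>l<n. ws ! j $ l * cnj (ws ! i $ l)) / (complex_of_real (r i) * complex_of_real (r j))"
      using i j by (simp add: scalar_prod_def sum_divide_distrib lessThan_atLeast0 ac_simps)
    also have "(\<Sum>l<n. ws ! j $ l * cnj (ws ! i $ l)) = ws ! j \<bullet>c ws ! i"
      using wsj[OF i] wsj[OF j] by (simp add: scalar_prod_def lessThan_atLeast0)
    finally show ?thesis
      using corthogonalD[OF ws(2), of j i] self[OF j] i j ws(3) by (auto simp: power2_eq_square)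
  qed
  then show ?thesis
    unfolding isometry_mat_def by (auto intro!: eq_matI)
qed

lemma unitary_completion:
  assumes v: "v \<in> carrier_vec n" "v \<noteq> 0\<^sub>v n"
  obtains W c where "isometry_mat n n W" "col W 0 = c \<cdot>\<^sub>v v"
proof -
  interpret cof_vec_space n "TYPE(complex)" .
  define ws where "ws = gram_schmidt n (basis_completion v)"
  obtain vs where b: "basis_completion v = v # vs" "set (v # vs) \<subseteq> carrier_vec n"
    "distinct (v # vs)" "\<not> lin_dep (set (v # vs))" "length (v # vs) = n"
    using basis_completion[OF v] v by (cases "basis_completion v") auto
  have ws: "set ws \<subseteq> carrier_vec n" "corthogonal ws" "length ws = n"
    using gram_schmidt_result[OF b(2-4) refl] b(5) unfolding ws_def b(1) by auto
  have n: "0 < n" using v by (cases n) auto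
  have ws0: "ws ! 0 = v"
    using gram_schmidt_hd[OF v(1), of vs] hd_conv_nth[of ws] ws(3) n unfolding ws_def b(1)
    by (metis length_greater_0_conv)
  define r where "r j = sqrt (Re (ws ! j \<bullet>c ws ! j))" for j
  define W where "W = mat n n (\<lambda>(l, j). ws ! j $ l / complex_of_real (r j))"
  have "isometry_mat n n W"
    unfolding W_def r_def by (rule isometry_mat_normalized_cols[OF ws])
  moreover have "col W 0 = (1 / complex_of_real (r 0)) \<cdot>\<^sub>v v"
    using n v unfolding W_def ws0[symmetric] by (intro eq_vecI) (auto simp: ws0)
  ultimately show ?thesis ..
qed

lemma mat_adjoint_four_block_mat:
  fixes A B C D :: "complex mat"
  assumes "A \<in> carrier_mat nr nc" "B \<in> carrier_mat nr mc"
    and "C \<in> carrier_mat mr nc" "D \<in> carrier_mat mr mc"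
  shows "(four_block_mat A B C D)\<^sup>H = four_block_mat (A\<^sup>H) (C\<^sup>H) (B\<^sup>H) (D\<^sup>H)"
  by (rule eq_matI) (use assms in auto)

lemma isometry_mat_four_block_one:
  assumes U: "isometry_mat m m U"
  shows "isometry_mat (Suc m) (Suc m) (four_block_mat (1\<^sub>m 1) (0\<^sub>m 1 m) (0\<^sub>m m 1) U)"
proof -
  have Uc: "U \<in> carrier_mat m m" and UU: "U\<^sup>H * U = 1\<^sub>m m"
    using isometry_matD[OF U] by auto
  let ?E = "four_block_mat (1\<^sub>m 1) (0\<^sub>m 1 m) (0\<^sub>m m 1) U"
  have "?E\<^sup>H = four_block_mat (1\<^sub>m 1) (0\<^sub>m 1 m) (0\<^sub>m m 1) (U\<^sup>H)"
    using mat_adjoint_four_block_mat[OF one_carrier_mat zero_carrier_mat zero_carrier_mat Uc] by simp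
  also have "\<dots> * ?E = four_block_mat (1\<^sub>m 1) (0\<^sub>m 1 m) (0\<^sub>m m 1) (1\<^sub>m m)"
    using Uc UU by (simp add: mult_four_block_mat[OF one_carrier_mat zero_carrier_mat zero_carrier_mat
          mat_adjoint_carrier[OF Uc] one_carrier_mat zero_carrier_mat zero_carrier_mat Uc])
  finally have "?E\<^sup>H * ?E = 1\<^sub>m (Suc m)"
    using four_block_one_mat[of 1 m] by simp
  moreover have "?E \<in> carrier_mat (Suc m) (Suc m)"
    using four_block_carrier_mat[OF one_carrier_mat Uc, of 1 "0\<^sub>m 1 m" "0\<^sub>m m 1"] by simp
  ultimately show ?thesis
    unfolding isometry_mat_def by blast
qed

lemma mat_diag_Cons_four_block:
  "mat_diag (Suc m) (\<lambda>i. (e # es) ! i)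
    = four_block_mat (mat 1 1 (\<lambda>_. e)) (0\<^sub>m 1 m) (0\<^sub>m m 1) (mat_diag m (\<lambda>i. es ! i))"
  by (rule eq_matI) (auto simp: mat_diag_def nth_Cons')

lemma unitary_conj_col_eigenvector:
  assumes A: "A \<in> carrier_mat n n" and W: "isometry_mat n n W" and n: "0 < n"
    and W0: "col W 0 = c \<cdot>\<^sub>v v" and v: "v \<in> carrier_vec n" and Av: "A *\<^sub>v v = e \<cdot>\<^sub>v v"
  shows "col (W\<^sup>H * A * W) 0 = e \<cdot>\<^sub>v unit_vec n 0"
proof -
  have Wc: "W \<in> carrier_mat n n" and WW: "W\<^sup>H * W = 1\<^sub>m n"
    using isometry_matD[OF W] by auto
  have WH: "W\<^sup>H \<in> carrier_mat n n" using Wc by simp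
  have "col (A * W) 0 = A *\<^sub>v (c \<cdot>\<^sub>v v)"
    using col_mult2[OF A Wc n] by (simp add: W0)
  also have "\<dots> = c \<cdot>\<^sub>v (A *\<^sub>v v)"
    by (rule mult_mat_vec[OF A v])
  also have "\<dots> = e \<cdot>\<^sub>v col W 0"
    using v by (auto simp: Av W0 intro!: eq_vecI)
  finally have AW0: "col (A * W) 0 = e \<cdot>\<^sub>v col W 0" .
  have "col (W\<^sup>H * A * W) 0 = W\<^sup>H *\<^sub>v col (A * W) 0"
    using A Wc col_mult2[OF WH mult_carrier_mat[OF A Wc] n] by (simp add: assoc_mult_mat_dim)
  also have "\<dots> = e \<cdot>\<^sub>v col (W\<^sup>H * W) 0"
    using Wc col_mult2[OF WH Wc n] mult_mat_vec[OF WH, of "col W 0" e] unfolding AW0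
    by (simp add: carrier_vecI)
  finally show ?thesis
    using n by (simp add: WW)
qed

lemma hermitian_deflation:
  assumes A: "A \<in> carrier_mat (Suc m) (Suc m)" and herm: "A\<^sup>H = A"
    and W: "isometry_mat (Suc m) (Suc m) W" and W0: "col W 0 = c \<cdot>\<^sub>v v"
    and v: "v \<in> carrier_vec (Suc m)" and Av: "A *\<^sub>v v = e \<cdot>\<^sub>v v"
  shows "\<exists>A3 \<in> carrier_mat m m. A3\<^sup>H = A3 \<and>
    W\<^sup>H * A * W = four_block_mat (mat 1 1 (\<lambda>_. e)) (0\<^sub>m 1 m) (0\<^sub>m m 1) A3"
proof -
  let ?n = "Suc m"
  have Wc: "W \<in> carrier_mat ?n ?n"
    using isometry_matD[OF W] by auto
  define A' where "A' = W\<^sup>H * A * W"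
  have A': "A' \<in> carrier_mat ?n ?n" unfolding A'_def using A Wc by auto
  have col_A': "col A' 0 = e \<cdot>\<^sub>v unit_vec ?n 0"
    unfolding A'_def by (rule unitary_conj_col_eigenvector[OF A W _ W0 v Av]) simp
  have col0: "A' $$ (i, 0) = (if i = 0 then e else 0)" if "i < ?n" for i
  proof -
    have "A' $$ (i, 0) = col A' 0 $ i"
      using that carrier_matD[OF A'] by simp
    also have "\<dots> = (if i = 0 then e else 0)"
      using that unfolding col_A' by simp
    finally show ?thesis .
  qed
  have A'_herm: "A'\<^sup>H = A'"
    unfolding A'_def using A Wc by (simp add: mat_adjoint_mult assoc_mult_mat_dim herm)
  have A'_cnj: "A' $$ (i, j) = cnj (A' $$ (j, i))" if "i < ?n" "j < ?n" for i j
    using that A' mat_adjoint_index[of i A' j] by (simp add: A'_herm)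
  have row0: "A' $$ (0, j) = (if j = 0 then e else 0)" if "j < ?n" for j
    using that A'_cnj[of 0 j] col0[of j] col0[of 0] by (cases "j = 0") simp_all
  define A3 where "A3 = mat m m (\<lambda>(i, j). A' $$ (Suc i, Suc j))"
  have "A3\<^sup>H = A3"
  proof (rule eq_matI)
    fix i j assume "i < dim_row A3" "j < dim_col A3"
    then show "A3\<^sup>H $$ (i, j) = A3 $$ (i, j)"
      using A'_cnj[of "Suc i" "Suc j"] by (simp add: A3_def)
  qed (simp_all add: A3_def)
  moreover have "A' = four_block_mat (mat 1 1 (\<lambda>_. e)) (0\<^sub>m 1 m) (0\<^sub>m m 1) A3"
    unfolding A3_def using carrier_matD[OF A'] col0 row0 by (intro eq_matI) auto
  ultimately show ?thesis
    unfolding A'_def A3_def by auto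
qed

lemma unitary_conj_intertwine:
  assumes W: "isometry_mat n n W" and A: "A \<in> carrier_mat n n"
    and E: "E \<in> carrier_mat n n" and D: "D \<in> carrier_mat n n"
    and AED: "W\<^sup>H * A * W * E = E * D"
  shows "A * (W * E) = W * E * D"
proof -
  have dims: "dim_row W = n" "dim_col W = n" "dim_row E = n" "dim_col E = n" "dim_row D = n"
    using isometry_matD[OF W] E D by auto
  have "A * (W * E) = A * W * E"
    using A dims by (simp add: assoc_mult_mat_dim)
  also have "\<dots> = W * (W\<^sup>H * A * W) * E"
    by (simp only: unitary_conj_mult[OF W A])
  also have "\<dots> = W * (W\<^sup>H * A * W * E)"
    by (rule assoc_mult_mat_dim) (use A dims in simp_all)
  also have "\<dots> = W * E * D"
    unfolding AED using dims by (simp add: assoc_mult_mat_dim)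
  finally show ?thesis .
qed

lemma four_block_one_mult_commute:
  fixes A D U :: "complex mat"
  assumes A: "A \<in> carrier_mat m m" and U: "U \<in> carrier_mat m m" and D: "D \<in> carrier_mat m m"
    and AU: "A * U = U * D"
  shows "four_block_mat (mat 1 1 (\<lambda>_. e)) (0\<^sub>m 1 m) (0\<^sub>m m 1) A
      * four_block_mat (1\<^sub>m 1) (0\<^sub>m 1 m) (0\<^sub>m m 1) U
    = four_block_mat (1\<^sub>m 1) (0\<^sub>m 1 m) (0\<^sub>m m 1) U
      * four_block_mat (mat 1 1 (\<lambda>_. e)) (0\<^sub>m 1 m) (0\<^sub>m m 1) D"
proof -
  have E: "mat 1 1 (\<lambda>_. e) \<in> carrier_mat 1 1" by simp
  have "four_block_mat (mat 1 1 (\<lambda>_. e)) (0\<^sub>m 1 m) (0\<^sub>m m 1) A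
      * four_block_mat (1\<^sub>m 1) (0\<^sub>m 1 m) (0\<^sub>m m 1) U
      = four_block_mat (mat 1 1 (\<lambda>_. e)) (0\<^sub>m 1 m) (0\<^sub>m m 1) (A * U)"
    unfolding mult_four_block_mat[OF E zero_carrier_mat zero_carrier_mat A
        one_carrier_mat zero_carrier_mat zero_carrier_mat U]
    using A U by (simp add: right_mult_one_mat)
  also have "\<dots> = four_block_mat (1\<^sub>m 1) (0\<^sub>m 1 m) (0\<^sub>m m 1) U
      * four_block_mat (mat 1 1 (\<lambda>_. e)) (0\<^sub>m 1 m) (0\<^sub>m m 1) D"
    unfolding mult_four_block_mat[OF one_carrier_mat zero_carrier_mat zero_carrier_mat U
        E zero_carrier_mat zero_carrier_mat D]
    using U D by (simp add: AU left_mult_one_mat)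
  finally show ?thesis .
qed

lemma hermitian_unitary_diagonalization:
  assumes "A \<in> carrier_mat n n" "A\<^sup>H = A" "char_poly A = (\<Prod>e\<leftarrow>es. [:- e, 1:])"
  shows "\<exists>U. isometry_mat n n U \<and> A * U = U * mat_diag n (\<lambda>i. es ! i)"
  using assms
proof (induction es arbitrary: n A)
  case Nil
  then have "n = 0"
    using degree_monic_char_poly[OF Nil(1)] by simp
  then show ?case
    using Nil(1) by (intro exI[of _ "1\<^sub>m 0"]) (auto simp: isometry_mat_def intro!: eq_matI)
next
  case (Cons e es n A)
  note A = Cons.prems(1) and herm = Cons.prems(2)
  have "eigenvalue A e"
    unfolding eigenvalue_root_char_poly[OF A] Cons.prems(3) by simp
  then obtain v where v: "v \<in> carrier_vec n" "v \<noteq> 0\<^sub>v n" and Av: "A *\<^sub>v v = e \<cdot>\<^sub>v v"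
    using find_eigenvector[OF A] A unfolding eigenvector_def by auto
  obtain m where n: "n = Suc m"
    using v by (cases n) auto
  obtain W c where W: "isometry_mat n n W" and W0: "col W 0 = c \<cdot>\<^sub>v v"
    using unitary_completion[OF v] by blast
  obtain A3 where A3: "A3 \<in> carrier_mat m m" "A3\<^sup>H = A3"
    and blk: "W\<^sup>H * A * W = four_block_mat (mat 1 1 (\<lambda>_. e)) (0\<^sub>m 1 m) (0\<^sub>m m 1) A3"
    using hermitian_deflation[OF _ herm _ W0 _ Av] A W v unfolding n by blast
  have "char_poly A = char_poly (W\<^sup>H * A * W)"
    by (rule char_poly_similar[OF similar_mat_unitary_conj[OF W A]])
  also have "\<dots> = char_poly (mat 1 1 (\<lambda>_. e)) * char_poly A3"
    unfolding blk by (rule char_poly_four_block_zeros_col) (use A3 in auto)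
  also have "char_poly (mat 1 1 (\<lambda>_. e)) = [:- e, 1:]"
    by (simp add: char_poly_defs det_def sign_def)
  finally have "[:- e, 1:] * char_poly A3 = [:- e, 1:] * (\<Prod>e\<leftarrow>es. [:- e, 1:])"
    unfolding Cons.prems(3) by simp
  then have "char_poly A3 = (\<Prod>e\<leftarrow>es. [:- e, 1:])"
    by (metis mult_cancel_left pCons_eq_0_iff zero_neq_one)
  then obtain U3 where U3: "isometry_mat m m U3" and AU3: "A3 * U3 = U3 * mat_diag m (\<lambda>i. es ! i)"
    using Cons.IH[OF A3] by blast
  define E where "E = four_block_mat (1\<^sub>m 1) (0\<^sub>m 1 m) (0\<^sub>m m 1) U3"
  have E: "isometry_mat n n E"
    unfolding E_def n by (rule isometry_mat_four_block_one[OF U3])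
  have U3c: "U3 \<in> carrier_mat m m" using isometry_matD[OF U3] by simp
  have "W\<^sup>H * A * W * E = E * mat_diag n (\<lambda>i. (e # es) ! i)"
    unfolding blk E_def n mat_diag_Cons_four_block
    by (rule four_block_one_mult_commute[OF A3(1) U3c mat_diag_dim AU3])
  then have "A * (W * E) = W * E * mat_diag n (\<lambda>i. (e # es) ! i)"
    using unitary_conj_intertwine[OF W A isometry_matD(1)[OF E] mat_diag_dim] by blast
  then show ?case
    using isometry_mat_mult[OF W E] by blast
qed

lemma hermitian_diagonal_real:
  assumes A: "A \<in> carrier_mat n n" "A\<^sup>H = A" and U: "isometry_mat n n U"
    and AU: "A * U = U * mat_diag n f" and i: "i < n"
  shows "cnj (f i) = f i"
proof -
  have dims: "dim_row A = n" "dim_col A = n" "dim_row U = n" "dim_col U = n"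
    using A(1) isometry_matD[OF U] by auto
  have D: "U\<^sup>H * (A * U) = mat_diag n f"
    using dims by (simp add: AU isometry_mat_cancel_left[OF U])
  have "(U\<^sup>H * (A * U))\<^sup>H = U\<^sup>H * (A * U)"
    using dims A(2) by (simp add: mat_adjoint_mult assoc_mult_mat_dim)
  then have "(mat_diag n f)\<^sup>H = mat_diag n f"
    by (simp only: D)
  then have "mat_diag n (\<lambda>i. cnj (f i)) $$ (i, i) = mat_diag n f $$ (i, i)"
    by (simp only: mat_adjoint_mat_diag)
  then show ?thesis
    using i by (simp add: mat_diag_def)
qed

lemma proots_prod_linear_factors: "proots (\<Prod>e\<leftarrow>es. [:- e, 1:]) = mset (es :: 'a :: idom list)"
proof (induction es)
  case (Cons e es)
  have "proots ([:- e, 1:] * (\<Prod>e\<leftarrow>es. [:- e, 1:])) = proots [:- e, 1:] + proots (\<Prod>e\<leftarrow>es. [:- e, 1:])"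
    by (rule proots_mult) (auto simp: prod_list_zero_iff)
  then show ?case
    using Cons.IH by (simp only: list.map prod_list.Cons) simp
qed simp

lemma prod_linear_factors_mset_cong:
  "mset es = mset es' \<Longrightarrow> (\<Prod>e\<leftarrow>es. [:- e, 1:]) = (\<Prod>e\<leftarrow>es'. [:- e, 1:])"
  by (metis mset_map prod_mset_prod_list)

lemma eig_desc_eq:
  "char_poly A = (\<Prod>e\<leftarrow>es. [:- e, 1:]) \<Longrightarrow>
    eig_desc A = rev (sorted_list_of_multiset (image_mset Re (mset es)))"
  unfolding eig_desc_def by (simp add: proots_prod_linear_factors)

lemma sum_list_map_eig_desc:
  fixes g :: "real \<Rightarrow> 'a :: comm_monoid_add"
  assumes "char_poly A = (\<Prod>e\<leftarrow>es. [:- e, 1:])"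
  shows "(\<Sum>x\<leftarrow>eig_desc A. g x) = (\<Sum>e\<leftarrow>es. g (Re e))"
proof -
  have "(\<Sum>x\<leftarrow>eig_desc A. g x) = sum_mset (image_mset g (image_mset Re (mset es)))"
    unfolding eig_desc_eq[OF assms] by (simp flip: sum_mset_sum_list)
  also have "\<dots> = (\<Sum>e\<leftarrow>es. g (Re e))"
    by (simp add: image_mset.compositionality o_def flip: sum_mset_sum_list)
  finally show ?thesis .
qed

lemma eig_desc_antimono:
  assumes "i \<le> j" "j < length (eig_desc A)"
  shows "eig_desc A ! j \<le> eig_desc A ! i"
proof -
  define S where "S = sorted_list_of_multiset (image_mset Re (proots (char_poly A)))"
  have "eig_desc A = rev S"
    unfolding eig_desc_def S_def ..
  then show ?thesis
    using assms sorted_nth_mono[of S "length S - Suc j" "length S - Suc i"]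
    by (simp add: rev_nth S_def)
qed

lemma hermitian_eig_desc:
  assumes H: "H \<in> carrier_mat n n" and herm: "H\<^sup>H = H"
  shows "length (eig_desc H) = n"
    and "char_poly H = (\<Prod>e\<leftarrow>map complex_of_real (eig_desc H). [:- e, 1:])"
proof -
  obtain es where cp: "char_poly H = (\<Prod>e\<leftarrow>es. [:- e, 1:])" and len: "length es = n"
    using char_poly_factorized[OF H] by blast
  obtain U where U: "isometry_mat n n U" and HU: "H * U = U * mat_diag n (\<lambda>i. es ! i)"
    using hermitian_unitary_diagonalization[OF H herm cp] by blast
  have real: "complex_of_real (Re e) = e" if "e \<in> set es" for e
    using that hermitian_diagonal_real[OF H herm U HU] len
    by (auto simp: in_set_conv_nth complex_eq_iff)
  define S where "S = sorted_list_of_multiset (image_mset Re (mset es))"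
  have L: "eig_desc H = rev S"
    unfolding eig_desc_eq[OF cp] S_def ..
  have "length S = n"
    unfolding S_def using len by (metis mset_sorted_list_of_multiset size_image_mset size_mset)
  then show "length (eig_desc H) = n"
    unfolding L by simp
  have "mset (map complex_of_real S) = mset (map (\<lambda>e. complex_of_real (Re e)) es)"
    unfolding S_def mset_map mset_sorted_list_of_multiset by (simp add: multiset.map_comp o_def)
  also have "map (\<lambda>e. complex_of_real (Re e)) es = es"
    using real by (intro map_idI)
  finally show "char_poly H = (\<Prod>e\<leftarrow>map complex_of_real (eig_desc H). [:- e, 1:])"
    unfolding cp L by (intro prod_linear_factors_mset_cong) simp
qed

lemma hermitian_eig_desc_diagonalization:
  assumes H: "H \<in> carrier_mat n n" and herm: "H\<^sup>H = H"
  obtains U where "isometry_mat n n U"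
    "H * U = U * mat_diag n (\<lambda>i. complex_of_real (eig_desc H ! i))"
proof -
  obtain U where "isometry_mat n n U"
    "H * U = U * mat_diag n (\<lambda>i. map complex_of_real (eig_desc H) ! i)"
    using hermitian_unitary_diagonalization[OF H herm hermitian_eig_desc(2)[OF H herm]] by blast
  moreover have "mat_diag n (\<lambda>i. map complex_of_real (eig_desc H) ! i)
      = mat_diag n (\<lambda>i. complex_of_real (eig_desc H ! i))"
    using hermitian_eig_desc(1)[OF H herm] unfolding mat_diag_def by (intro eq_matI) auto
  ultimately show ?thesis
    using that by auto
qed

section \<open>Canonical angles\<close>

lemma sin_arccos_sqrt_sq: "0 \<le> c \<Longrightarrow> c \<le> 1 \<Longrightarrow> (sin (arccos (sqrt c)))\<^sup>2 = 1 - c"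
proof -
  assume "0 \<le> c" "c \<le> 1"
  moreover have "-1 \<le> sqrt c"
    using \<open>0 \<le> c\<close> real_sqrt_ge_zero[of c] by linarith
  ultimately have "sin (arccos (sqrt c)) = sqrt (1 - c)"
    using sin_arccos[of "sqrt c"] by simp
  then show ?thesis
    using \<open>c \<le> 1\<close> by simp
qed

lemma sum_list_sing_vals:
  fixes g :: "real \<Rightarrow> 'a :: comm_monoid_add"
  assumes Z: "Z \<in> carrier_mat m k"
  obtains V where "isometry_mat k k V"
    "(\<Sum>\<sigma>\<leftarrow>sing_vals Z. g \<sigma>) = (\<Sum>i<k. g (sqrt (col_norm_sq (Z * V) i)))"
proof -
  have S: "Z\<^sup>H * Z \<in> carrier_mat k k" and S_herm: "(Z\<^sup>H * Z)\<^sup>H = Z\<^sup>H * Z"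
    using Z by (auto simp: mat_adjoint_mult)
  obtain es where cp: "char_poly (Z\<^sup>H * Z) = (\<Prod>e\<leftarrow>es. [:- e, 1:])" and len: "length es = k"
    using char_poly_factorized[OF S] by blast
  obtain V where V: "isometry_mat k k V" and SV: "Z\<^sup>H * Z * V = V * mat_diag k (\<lambda>i. es ! i)"
    using hermitian_unitary_diagonalization[OF S S_herm cp] by blast
  have dims: "dim_row V = k" "dim_col V = k" "dim_row Z = m" "dim_col Z = k"
    using isometry_matD[OF V] Z by auto
  have "(Z * V)\<^sup>H * (Z * V) = V\<^sup>H * (Z\<^sup>H * Z * V)"
    using dims by (simp add: mat_adjoint_mult assoc_mult_mat_dim)
  also have "\<dots> = mat_diag k (\<lambda>i. es ! i)"
    using dims by (simp add: SV isometry_mat_cancel_left[OF V])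
  finally have es: "es ! i = complex_of_real (col_norm_sq (Z * V) i)" if "i < k" for i
    using that gram_diag_eq_col_norm_sq[of i "Z * V"] dims by (simp add: mat_diag_def)
  have "(\<Sum>\<sigma>\<leftarrow>sing_vals Z. g \<sigma>) = (\<Sum>e\<leftarrow>es. g (sqrt (Re e)))"
    unfolding sing_vals_def using sum_list_map_eig_desc[OF cp, of "\<lambda>x. g (sqrt x)"]
    by (simp add: o_def)
  also have "\<dots> = (\<Sum>i<k. g (sqrt (col_norm_sq (Z * V) i)))"
    unfolding sum_list_sum_nth atLeast0LessThan using es len by (intro sum.cong) simp_all
  finally show ?thesis
    using V that by blast
qed

lemma sin_theta_F_eq:
  assumes P: "isometry_mat n k P" and Q: "isometry_mat n k Q"
  shows "sin_theta_F P Q = sqrt (real k - frob_sq (P\<^sup>H * Q))"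
proof -
  define Z where "Z = P\<^sup>H * Q"
  have Z: "Z \<in> carrier_mat k k"
    unfolding Z_def using isometry_matD[OF P] isometry_matD[OF Q] by auto
  obtain V where V: "isometry_mat k k V" and sv: "(\<Sum>\<sigma>\<leftarrow>sing_vals Z. (sin (arccos \<sigma>))\<^sup>2)
      = (\<Sum>i<k. (sin (arccos (sqrt (col_norm_sq (Z * V) i))))\<^sup>2)"
    using sum_list_sing_vals[OF Z] by blast
  have dims: "dim_row V = k" "dim_col V = k" "dim_row Z = k" "dim_col Z = k"
    using isometry_matD[OF V] Z by auto
  have "Z * V = P\<^sup>H * (Q * V)"
    unfolding Z_def using dims isometry_matD[OF P] isometry_matD[OF Q]
    by (simp add: assoc_mult_mat_dim)
  then have le_1: "col_norm_sq (Z * V) i \<le> 1" if "i < k" for i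
    using that col_norm_sq_adjoint_mult_isometry_le_1[OF P isometry_mat_mult[OF Q V]] by simp
  have "(\<Sum>\<sigma>\<leftarrow>sing_vals Z. (sin (arccos \<sigma>))\<^sup>2) = (\<Sum>i<k. 1 - col_norm_sq (Z * V) i)"
    unfolding sv using le_1 col_norm_sq_nonneg
    by (intro sum.cong) (simp_all add: sin_arccos_sqrt_sq)
  also have "\<dots> = real k - frob_sq (Z * V)"
    unfolding frob_sq_eq_sum_cols[of "Z * V"] using dims by (simp add: sum_subtractf)
  also have "frob_sq (Z * V) = frob_sq Z"
    by (rule frob_sq_mult_unitary[OF V]) (use dims in simp)
  finally show ?thesis
    unfolding sin_theta_F_def Z_def by simp
qed

section \<open>Invariant subspaces\<close>

lemma isometry_mat_zero_rows_mult_adjoint: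
  assumes C: "isometry_mat n k C" and kn: "k \<le> n"
    and zero: "\<And>i j. k \<le> i \<Longrightarrow> i < n \<Longrightarrow> j < k \<Longrightarrow> C $$ (i, j) = 0"
  shows "C * C\<^sup>H = mat_diag n (\<lambda>i. if i < k then 1 else 0)"
proof -
  have dims: "dim_row C = n" "dim_col C = k" and CC: "C\<^sup>H * C = 1\<^sub>m k"
    using isometry_matD[OF C] by auto
  define C1 where "C1 = mat k k (\<lambda>(i, j). C $$ (i, j))"
  have C1: "C1 \<in> carrier_mat k k" unfolding C1_def by simp
  have "C1\<^sup>H * C1 = 1\<^sub>m k"
  proof (rule eq_matI)
    fix i j assume ij: "i < dim_row (1\<^sub>m k :: complex mat)" "j < dim_col (1\<^sub>m k :: complex mat)"
    have "(C1\<^sup>H * C1) $$ (i, j) = (\<Sum>l\<in>{0..<k}. cnj (C $$ (l, i)) * C $$ (l, j))"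
      using ij unfolding C1_def by (simp add: scalar_prod_def)
    also have "\<dots> = (\<Sum>l\<in>{0..<n}. cnj (C $$ (l, i)) * C $$ (l, j))"
      by (rule sum.mono_neutral_left) (use kn zero ij in auto)
    also have "\<dots> = (C\<^sup>H * C) $$ (i, j)"
      using ij dims by (simp add: scalar_prod_def)
    finally show "(C1\<^sup>H * C1) $$ (i, j) = 1\<^sub>m k $$ (i, j)"
      unfolding CC .
  qed (simp_all add: C1_def)
  then have C1C1: "C1 * C1\<^sup>H = 1\<^sub>m k"
    using unitary_mat_mult_adjoint C1 by (simp add: isometry_mat_def)
  show ?thesis
  proof (rule eq_matI)
    fix i l assume il: "i < dim_row (mat_diag n (\<lambda>i. if i < k then 1 else (0::complex)))"
      "l < dim_col (mat_diag n (\<lambda>i. if i < k then 1 else (0::complex)))"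
    have "(C * C\<^sup>H) $$ (i, l) = (\<Sum>m<k. C $$ (i, m) * cnj (C $$ (l, m)))"
      using il dims by (simp add: scalar_prod_def lessThan_atLeast0)
    also have "\<dots> = mat_diag n (\<lambda>i. if i < k then 1 else 0) $$ (i, l)"
    proof (cases "i < k \<and> l < k")
      case True
      then show ?thesis
        using arg_cong[OF C1C1, of "\<lambda>X. X $$ (i, l)"] il
        by (simp add: C1_def scalar_prod_def lessThan_atLeast0 mat_diag_def)
    next
      case False
      then show ?thesis
        using il zero by (auto simp: mat_diag_def intro!: sum.neutral)
    qed
    finally show "(C * C\<^sup>H) $$ (i, l) = mat_diag n (\<lambda>i. if i < k then 1 else 0) $$ (i, l)" .
  qed (simp_all add: dims)
qed

lemma invariant_subspace_orthogonal_eigenvector: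
  assumes H: "H \<in> carrier_mat n n" and herm: "H\<^sup>H = H"
    and U: "isometry_mat n n U" and HU: "H * U = U * mat_diag n d"
    and Ps: "isometry_mat n k Ps" and M: "M \<in> carrier_mat k k" and HPs: "H * Ps = Ps * M"
    and i: "i < n" "\<not> eigenvalue M (d i)" and j: "j < k"
  shows "(U\<^sup>H * Ps) $$ (i, j) = 0"
proof -
  have dims: "dim_row H = n" "dim_col H = n" "dim_row U = n" "dim_col U = n"
    "dim_row Ps = n" "dim_col Ps = k" "dim_row M = k" "dim_col M = k"
    using H M isometry_matD[OF U] isometry_matD[OF Ps] by auto
  have "M = Ps\<^sup>H * (H * Ps)"
    using dims by (simp add: HPs isometry_mat_cancel_left[OF Ps])
  then have "M\<^sup>H = M"
    using dims herm by (simp add: mat_adjoint_mult assoc_mult_mat_dim)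
  then have PsH: "Ps\<^sup>H * H = M * Ps\<^sup>H"
    using arg_cong[OF HPs, of mat_adjoint] dims herm by (simp add: mat_adjoint_mult)
  define B where "B = Ps\<^sup>H * U"
  have B: "B \<in> carrier_mat k n" unfolding B_def using dims by (auto intro: carrier_matI)
  have "M * B = M * Ps\<^sup>H * U"
    unfolding B_def using dims by (simp add: assoc_mult_mat_dim)
  also have "\<dots> = Ps\<^sup>H * (H * U)"
    using dims by (simp add: assoc_mult_mat_dim flip: PsH)
  also have "\<dots> = B * mat_diag n d"
    unfolding B_def HU using dims by (simp add: assoc_mult_mat_dim)
  finally have MB: "M * B = B * mat_diag n d" .
  have "M *\<^sub>v col B i = col (B * mat_diag n d) i"
    using col_mult2[OF M B i(1)] by (simp add: MB)
  also have "\<dots> = d i \<cdot>\<^sub>v col B i"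
    using B i(1) by (auto simp: mat_diag_mult_right[OF B] intro!: eq_vecI)
  moreover have "col B i \<in> carrier_vec k"
    using B by (simp add: carrier_vecI)
  ultimately have "col B i = 0\<^sub>v k"
    using i(2) unfolding eigenvalue_def eigenvector_def by (auto simp: dims)
  then have "B $$ (j, i) = 0"
    using B i(1) j index_col[of j B i] by simp
  moreover have "U\<^sup>H * Ps = B\<^sup>H"
    unfolding B_def using dims by (simp add: mat_adjoint_mult)
  ultimately show ?thesis
    using B i(1) j by simp
qed

lemma invariant_subspace_projection:
  assumes H: "H \<in> carrier_mat n n" and herm: "H\<^sup>H = H"
    and U: "isometry_mat n n U" and HU: "H * U = U * mat_diag n d"
    and Ps: "isometry_mat n k Ps" and M: "M \<in> carrier_mat k k" and HPs: "H * Ps = Ps * M"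
    and kn: "k \<le> n" and not_eig: "\<And>i. k \<le> i \<Longrightarrow> i < n \<Longrightarrow> \<not> eigenvalue M (d i)"
  shows "Ps * Ps\<^sup>H = U * mat_diag n (\<lambda>i. if i < k then 1 else 0) * U\<^sup>H"
proof -
  have dims: "dim_row U = n" "dim_col U = n" "dim_row Ps = n" "dim_col Ps = k"
    using isometry_matD[OF U] isometry_matD[OF Ps] by auto
  define C where "C = U\<^sup>H * Ps"
  have C: "isometry_mat n k C"
    unfolding C_def by (rule isometry_mat_mult[OF isometry_mat_adjoint[OF U] Ps])
  have CC: "C * C\<^sup>H = mat_diag n (\<lambda>i. if i < k then 1 else 0)"
    using isometry_mat_zero_rows_mult_adjoint[OF C kn]
      invariant_subspace_orthogonal_eigenvector[OF H herm U HU Ps M HPs _ not_eig]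
    unfolding C_def by simp
  have "Ps = U * C"
    unfolding C_def using dims by (simp add: unitary_mat_cancel_left[OF U])
  then have "Ps * Ps\<^sup>H = U * (C * C\<^sup>H) * U\<^sup>H"
    using dims isometry_matD[OF C] by (simp add: mat_adjoint_mult assoc_mult_mat_dim)
  then show ?thesis
    by (simp only: CC)
qed

lemma not_eigenvalue_below_gap:
  fixes L :: "real list"
  assumes M: "M \<in> carrier_mat k k"
    and roots: "proots (char_poly M) = mset (map complex_of_real (take k L))"
    and antimono: "\<And>i j. i \<le> j \<Longrightarrow> j < length L \<Longrightarrow> L ! j \<le> L ! i"
    and gap: "L ! k < L ! (k - 1)" and i: "k \<le> i" "i < length L"
  shows "\<not> eigenvalue M (complex_of_real (L ! i))"
proof
  assume "eigenvalue M (complex_of_real (L ! i))"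
  then have "poly (char_poly M) (complex_of_real (L ! i)) = 0"
    using eigenvalue_root_char_poly[OF M] by simp
  moreover have "char_poly M \<noteq> 0"
    using degree_monic_char_poly[OF M] by auto
  ultimately have "complex_of_real (L ! i) \<in> set (map complex_of_real (take k L))"
    by (metis roots count_eq_zero_iff count_proots order_root set_mset_mset)
  then obtain j where j: "j < k" "L ! i = L ! j"
    using i by (auto simp: in_set_conv_nth)
  have "L ! (k - 1) \<le> L ! j" and "L ! i \<le> L ! k"
    using antimono[of j "k - 1"] antimono[of k i] j i by auto
  then show False
    using gap j(2) by linarith
qed

section \<open>Trace deficit and residual\<close>

lemma sum_lessThan_split:
  "k \<le> (n :: nat) \<Longrightarrow> (\<Sum>i<n. f i) = (\<Sum>i<k. f i) + (\<Sum>i\<in>{k..<n}. f i :: 'a :: comm_monoid_add)"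
  by (metis atLeast0LessThan le0 sum.atLeastLessThan_concat)

lemma sum_lessThan_if_less:
  "k \<le> (n :: nat) \<Longrightarrow> (\<Sum>i<n. if i < k then f i else 0) = (\<Sum>i<k. f i :: 'a :: comm_monoid_add)"
  by (simp add: sum_lessThan_split[of k n])

lemma sum_lessThan_if_not_less:
  "k \<le> (n :: nat) \<Longrightarrow> (\<Sum>i<n. if i < k then 0 else f i) = (\<Sum>i\<in>{k..<n}. f i :: 'a :: comm_monoid_add)"
  by (simp add: sum_lessThan_split[of k n])

lemma gap_mult_tail_le:
  fixes lam r :: "nat \<Rightarrow> real"
  assumes antimono: "\<And>i j. i \<le> j \<Longrightarrow> j < n \<Longrightarrow> lam j \<le> lam i" and k: "0 < k" "k < n"
    and r: "\<And>i. i < n \<Longrightarrow> 0 \<le> r i" "\<And>i. i < n \<Longrightarrow> r i \<le> 1"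
    and total: "(\<Sum>i<n. r i) = real k"
  shows "(lam (k - 1) - lam k) * (\<Sum>i\<in>{k..<n}. r i) \<le> (\<Sum>i<k. lam i) - (\<Sum>i<n. lam i * r i)"
proof -
  have tail: "(\<Sum>i\<in>{k..<n}. r i) = (\<Sum>i<k. 1 - r i)"
    using total sum_lessThan_split[of k n r] k by (simp add: sum_subtractf)
  have "lam (k - 1) * (\<Sum>i<k. 1 - r i) \<le> (\<Sum>i<k. lam i * (1 - r i))"
    unfolding sum_distrib_left
    by (intro sum_mono mult_right_mono) (use antimono r k in auto)
  moreover have "(\<Sum>i\<in>{k..<n}. lam i * r i) \<le> lam k * (\<Sum>i\<in>{k..<n}. r i)"
    unfolding sum_distrib_left
    by (intro sum_mono mult_right_mono) (use antimono r in auto)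
  moreover have "(\<Sum>i<n. lam i * r i) = (\<Sum>i<k. lam i) - (\<Sum>i<k. lam i * (1 - r i)) + (\<Sum>i\<in>{k..<n}. lam i * r i)"
    using sum_lessThan_split[of k n "\<lambda>i. lam i * r i"] k
    by (simp add: right_diff_distrib sum_subtractf)
  ultimately show ?thesis
    unfolding tail[symmetric] left_diff_distrib by (simp add: tail)
qed

(* lam is indexed from 0: lam i is the (i+1)-st largest eigenvalue, so lam (k - 1) - lam k
   is the gap. *)
locale dominant_eigenspace =
  fixes n k :: nat and H U Ps :: "complex mat" and lam :: "nat \<Rightarrow> real"
  assumes H: "H \<in> carrier_mat n n"
    and U: "isometry_mat n n U"
    and HU: "H * U = U * mat_diag n (\<lambda>i. complex_of_real (lam i))"
    and lam_antimono: "\<And>i j. i \<le> j \<Longrightarrow> j < n \<Longrightarrow> lam j \<le> lam i"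
    and k: "0 < k" "k < n"
    and Ps: "isometry_mat n k Ps"
    and Ps_proj: "Ps * Ps\<^sup>H = U * mat_diag n (\<lambda>i. if i < k then 1 else 0) * U\<^sup>H"

begin

lemma dims [simp]:
  "dim_row H = n" "dim_col H = n" "dim_row U = n" "dim_col U = n" "dim_row Ps = n" "dim_col Ps = k"
  using carrier_matD[OF H] isometry_matD(2,3)[OF U] isometry_matD(2,3)[OF Ps] by auto

lemma H_eq: "H = U * mat_diag n (\<lambda>i. complex_of_real (lam i)) * U\<^sup>H"
proof -
  have "H = H * (U * U\<^sup>H)"
    by (simp add: unitary_mat_mult_adjoint[OF U])
  also have "\<dots> = U * mat_diag n (\<lambda>i. complex_of_real (lam i)) * U\<^sup>H"
    by (simp add: assoc_mult_mat_dim flip: HU)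
  finally show ?thesis .
qed

lemma mat_trace_quadratic:
  assumes X: "X \<in> carrier_mat n m"
  shows "mat_trace (X\<^sup>H * H * X)
    = (\<Sum>i<n. complex_of_real (lam i) * complex_of_real (row_norm_sq (U\<^sup>H * X) i))"
proof -
  have "X\<^sup>H * H * X = (U\<^sup>H * X)\<^sup>H * mat_diag n (\<lambda>i. complex_of_real (lam i)) * (U\<^sup>H * X)"
    using X by (subst H_eq) (simp add: mat_adjoint_mult assoc_mult_mat_dim)
  moreover have "U\<^sup>H * X \<in> carrier_mat n m"
    using mult_carrier_mat[OF mat_adjoint_carrier[OF isometry_matD(1)[OF U]] X] .
  ultimately show ?thesis
    using mat_trace_adjoint_mat_diag by simp
qed

lemma sum_top_row_norm_sq:
  assumes X: "X \<in> carrier_mat n m"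
  shows "(\<Sum>i<k. row_norm_sq (U\<^sup>H * X) i) = frob_sq (Ps\<^sup>H * X)"
proof -
  let ?J = "mat_diag n (\<lambda>i. if i < k then 1 else (0 :: complex))"
  have UX: "U\<^sup>H * X \<in> carrier_mat n m"
    using mult_carrier_mat[OF mat_adjoint_carrier[OF isometry_matD(1)[OF U]] X] .
  have "(\<Sum>i<k. row_norm_sq (U\<^sup>H * X) i) = (\<Sum>i<n. if i < k then row_norm_sq (U\<^sup>H * X) i else 0)"
    using k by (simp add: sum_lessThan_if_less)
  also have "\<dots> = frob_sq (?J * (U\<^sup>H * X))"
    unfolding frob_sq_mat_diag_mult[OF UX] by (intro sum.cong) auto
  also have "\<dots> = frob_sq (U * (?J * (U\<^sup>H * X)))"
    using X by (simp add: frob_sq_isometry_mult[OF U])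
  also have "U * (?J * (U\<^sup>H * X)) = U * ?J * U\<^sup>H * X"
    using X by (simp add: assoc_mult_mat_dim)
  also have "\<dots> = Ps * (Ps\<^sup>H * X)"
    using X by (simp add: assoc_mult_mat_dim flip: Ps_proj)
  also have "frob_sq \<dots> = frob_sq (Ps\<^sup>H * X)"
    using X by (simp add: frob_sq_isometry_mult[OF Ps])
  finally show ?thesis .
qed

lemma row_norm_sq_Ps: "i < n \<Longrightarrow> row_norm_sq (U\<^sup>H * Ps) i = (if i < k then 1 else 0)"
proof -
  assume i: "i < n"
  have "(U\<^sup>H * Ps) * (U\<^sup>H * Ps)\<^sup>H = U\<^sup>H * (Ps * Ps\<^sup>H) * U"
    by (simp add: mat_adjoint_mult assoc_mult_mat_dim)
  also have "\<dots> = mat_diag n (\<lambda>i. if i < k then 1 else 0)"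
    unfolding Ps_proj
    by (simp add: assoc_mult_mat_dim isometry_mat_cancel_left[OF U] isometry_matD(4)[OF U])
  finally have "((U\<^sup>H * Ps) * (U\<^sup>H * Ps)\<^sup>H) $$ (i, i) = (if i < k then 1 else 0)"
    using i by (simp add: mat_diag_def)
  then have "complex_of_real (row_norm_sq (U\<^sup>H * Ps) i) = (if i < k then 1 else 0)"
    using gram_diag_eq_row_norm_sq[of i "U\<^sup>H * Ps"] i by simp
  then show ?thesis
    by (cases "i < k") simp_all
qed

lemma mat_trace_Ps: "mat_trace (Ps\<^sup>H * H * Ps) = complex_of_real (\<Sum>i<k. lam i)"
proof -
  have "mat_trace (Ps\<^sup>H * H * Ps) = complex_of_real (\<Sum>i<n. lam i * row_norm_sq (U\<^sup>H * Ps) i)"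
    by (simp add: mat_trace_quadratic[OF isometry_matD(1)[OF Ps]])
  also have "(\<Sum>i<n. lam i * row_norm_sq (U\<^sup>H * Ps) i) = (\<Sum>i<n. if i < k then lam i else 0)"
    by (intro sum.cong) (simp_all add: row_norm_sq_Ps)
  also have "\<dots> = (\<Sum>i<k. lam i)"
    using k by (simp add: sum_lessThan_if_less)
  finally show ?thesis .
qed

(* H - lam (k - 1) I = U (top_shift + bottom_shift) U^H *)
definition top_shift :: "complex mat" where
  "top_shift = mat_diag n (\<lambda>i. if i < k then complex_of_real (lam i - lam (k - 1)) else 0)"

definition bottom_shift :: "complex mat" where
  "bottom_shift = mat_diag n (\<lambda>i. if i < k then 0 else complex_of_real (lam i - lam (k - 1)))"

lemma shift_carrier: "top_shift \<in> carrier_mat n n" "bottom_shift \<in> carrier_mat n n"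
  unfolding top_shift_def bottom_shift_def by simp_all

context
  fixes P assumes P: "isometry_mat n k P"

begin

lemma P_dims [simp]: "dim_row P = n" "dim_col P = k"
  using isometry_matD[OF P] by auto

lemma sum_row_norm_sq_P: "(\<Sum>i<n. row_norm_sq (U\<^sup>H * P) i) = real k"
proof -
  have "(\<Sum>i<n. row_norm_sq (U\<^sup>H * P) i) = frob_sq (U\<^sup>H * P)"
    by (simp add: frob_sq_eq_sum_rows)
  also have "\<dots> = real k"
    by (simp add: frob_sq_isometry_mult[OF isometry_mat_adjoint[OF U]] frob_sq_isometry[OF P])
  finally show ?thesis .
qed

lemma row_norm_sq_P_le_1: "i < n \<Longrightarrow> row_norm_sq (U\<^sup>H * P) i \<le> 1"
  using col_norm_sq_adjoint[of i "U\<^sup>H * P"] col_norm_sq_adjoint_mult_isometry_le_1[OF P U, of i]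
  by (simp add: mat_adjoint_mult)

lemma sum_tail_row_norm_sq_P:
  "(\<Sum>i\<in>{k..<n}. row_norm_sq (U\<^sup>H * P) i) = real k - frob_sq (P\<^sup>H * Ps)"
proof -
  have "frob_sq (Ps\<^sup>H * P) = frob_sq (P\<^sup>H * Ps)"
    by (metis frob_sq_adjoint mat_adjoint_adjoint mat_adjoint_mult dims(5) P_dims(1) mat_adjoint_dim(2))
  then show ?thesis
    using sum_lessThan_split[of k n "row_norm_sq (U\<^sup>H * P)"] k sum_row_norm_sq_P
      sum_top_row_norm_sq[OF isometry_matD(1)[OF P]]
    by simp
qed

lemma trace_gap_lower_bound:
  "(lam (k - 1) - lam k) * (real k - frob_sq (P\<^sup>H * Ps))
    \<le> Re (mat_trace (Ps\<^sup>H * H * Ps) - mat_trace (P\<^sup>H * H * P))"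
proof -
  have "Re (mat_trace (P\<^sup>H * H * P)) = (\<Sum>i<n. lam i * row_norm_sq (U\<^sup>H * P) i)"
    by (simp add: mat_trace_quadratic[OF isometry_matD(1)[OF P]])
  then show ?thesis
    using gap_mult_tail_le[OF lam_antimono k row_norm_sq_nonneg row_norm_sq_P_le_1 sum_row_norm_sq_P]
    by (simp add: mat_trace_Ps sum_tail_row_norm_sq_P)
qed

lemma residual_split:
  "H * P - P * (P\<^sup>H * H * P)
    = (1\<^sub>m n - P * P\<^sup>H) * (U * (top_shift * (U\<^sup>H * P)))
      + (1\<^sub>m n - P * P\<^sup>H) * (U * (bottom_shift * (U\<^sup>H * P)))"
proof -
  define G where "G = 1\<^sub>m n - P * P\<^sup>H"
  define Y where "Y = U\<^sup>H * P"
  define c where "c = complex_of_real (lam (k - 1))"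
  have Uc: "U \<in> carrier_mat n n" and Pc: "P \<in> carrier_mat n k"
    using isometry_matD[OF U] isometry_matD[OF P] by auto
  have Y: "Y \<in> carrier_mat n k"
    unfolding Y_def using mult_carrier_mat[OF mat_adjoint_carrier[OF Uc] Pc] .
  have G: "G \<in> carrier_mat n n"
    unfolding G_def by (auto intro: minus_carrier_mat)
  have UD1: "U * (top_shift * Y) \<in> carrier_mat n k" and UD2: "U * (bottom_shift * Y) \<in> carrier_mat n k"
    using mult_carrier_mat[OF Uc mult_carrier_mat[OF shift_carrier(1) Y]]
      mult_carrier_mat[OF Uc mult_carrier_mat[OF shift_carrier(2) Y]] by auto
  have "mat_diag n (\<lambda>i. complex_of_real (lam i)) * Y = top_shift * Y + bottom_shift * Y + c \<cdot>\<^sub>m Y"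
    unfolding top_shift_def bottom_shift_def c_def mat_diag_mult_left[OF Y] using Y
    by (intro eq_matI) (auto simp: algebra_simps)
  moreover have "H * P = U * (mat_diag n (\<lambda>i. complex_of_real (lam i)) * Y)"
    unfolding Y_def by (subst H_eq) (simp add: assoc_mult_mat_dim)
  moreover have "U * (c \<cdot>\<^sub>m Y) = c \<cdot>\<^sub>m P"
    using mult_smult_distrib[OF Uc Y] unfolding Y_def by (simp add: unitary_mat_cancel_left[OF U])
  moreover have "U * (top_shift * Y + bottom_shift * Y + c \<cdot>\<^sub>m Y)
      = U * (top_shift * Y) + U * (bottom_shift * Y) + U * (c \<cdot>\<^sub>m Y)"
    using mult_add_distrib_mat[OF Uc add_carrier_mat[OF mult_carrier_mat[OF shift_carrier(2) Y]]
        smult_carrier_mat[OF Y]]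
      mult_add_distrib_mat[OF Uc mult_carrier_mat[OF shift_carrier(1) Y]
        mult_carrier_mat[OF shift_carrier(2) Y]]
    by simp
  ultimately have HP: "H * P = U * (top_shift * Y) + U * (bottom_shift * Y) + c \<cdot>\<^sub>m P"
    by simp
  have "G * (H * P) = H * P - P * P\<^sup>H * (H * P)"
    unfolding G_def using Pc
      minus_mult_distrib_mat[OF one_carrier_mat _ mult_carrier_mat[OF H Pc], of "P * P\<^sup>H"]
    by simp
  then have "H * P - P * (P\<^sup>H * H * P) = G * (H * P)"
    by (simp add: assoc_mult_mat_dim)
  also have "\<dots> = G * (U * (top_shift * Y)) + G * (U * (bottom_shift * Y)) + c \<cdot>\<^sub>m (G * P)"
    unfolding HP using G UD1 UD2 Pc
      assoc_add_mat[OF mult_carrier_mat[OF G UD1] mult_carrier_mat[OF G UD2]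
        smult_carrier_mat[OF mult_carrier_mat[OF G Pc]]]
    by (simp add: mult_add_distrib_mat[of G n n] mult_smult_distrib)
  also have "G * P = 0\<^sub>m n k"
    unfolding G_def by (rule complement_projection_mult_self[OF P])
  finally show ?thesis
    using right_add_zero_mat[OF add_carrier_mat[OF mult_carrier_mat[OF G UD2]],
        of "G * (U * (top_shift * Y))"]
    unfolding Y_def G_def by simp
qed

lemma frob_sq_residual_bottom_le:
  "frob_sq ((1\<^sub>m n - P * P\<^sup>H) * (U * (bottom_shift * (U\<^sup>H * P))))
    \<le> (lam (k - 1) - lam (n - 1))\<^sup>2 * (real k - frob_sq (P\<^sup>H * Ps))"
proof -
  let ?\<beta> = "lam (k - 1) - lam (n - 1)"
  have Uc: "U \<in> carrier_mat n n" and Pc: "P \<in> carrier_mat n k"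
    using isometry_matD[OF U] isometry_matD[OF P] by auto
  have UP: "U\<^sup>H * P \<in> carrier_mat n k"
    using mult_carrier_mat[OF mat_adjoint_carrier[OF Uc] Pc] .
  have "frob_sq ((1\<^sub>m n - P * P\<^sup>H) * (U * (bottom_shift * (U\<^sup>H * P)))) \<le> frob_sq (bottom_shift * (U\<^sup>H * P))"
    using frob_sq_complement_le(1)[OF P mult_carrier_mat[OF Uc mult_carrier_mat[OF shift_carrier(2) UP]]]
    by (simp add: frob_sq_isometry_mult[OF U] carrier_matD[OF shift_carrier(2)])
  also have "\<dots> \<le> (\<Sum>i<n. (if i < k then 0 else ?\<beta>)\<^sup>2 * row_norm_sq (U\<^sup>H * P) i)"
    unfolding bottom_shift_def
  proof (intro frob_sq_mat_diag_mult_le[OF UP])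
    fix i assume i: "i < n"
    show "cmod (if i < k then 0 else complex_of_real (lam i - lam (k - 1))) \<le> (if i < k then 0 else ?\<beta>)"
    proof (cases "i < k")
      case False
      then have "lam i \<le> lam (k - 1)" "lam (n - 1) \<le> lam i"
        using lam_antimono i by auto
      then show ?thesis
        using False by (simp del: of_real_diff)
    qed simp
  qed
  also have "\<dots> = (\<Sum>i<n. if i < k then 0 else ?\<beta>\<^sup>2 * row_norm_sq (U\<^sup>H * P) i)"
    by (intro sum.cong) auto
  also have "\<dots> = ?\<beta>\<^sup>2 * (real k - frob_sq (P\<^sup>H * Ps))"
    using k
    by (simp add: sum_lessThan_if_not_less sum_distrib_left[symmetric] sum_tail_row_norm_sq_P)
  finally show ?thesis .
qed

lemma frob_sq_residual_top_le:
  "frob_sq ((1\<^sub>m n - P * P\<^sup>H) * (U * (top_shift * (U\<^sup>H * P))))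
    \<le> (lam 0 - lam (k - 1))\<^sup>2 * (real k - frob_sq (P\<^sup>H * Ps))"
proof -
  let ?\<alpha> = "lam 0 - lam (k - 1)"
  define G where "G = 1\<^sub>m n - P * P\<^sup>H"
  have Uc: "U \<in> carrier_mat n n" and Pc: "P \<in> carrier_mat n k" and Psc: "Ps \<in> carrier_mat n k"
    using isometry_matD[OF U] isometry_matD[OF P] isometry_matD[OF Ps] by auto
  have G: "G \<in> carrier_mat n n"
    unfolding G_def by (auto intro: minus_carrier_mat)
  have UG: "U\<^sup>H * G \<in> carrier_mat n n"
    using mult_carrier_mat[OF mat_adjoint_carrier[OF Uc] G] .
  have G_herm: "G\<^sup>H = G"
    unfolding G_def by (rule complement_projection_adjoint[OF Pc])
  have D_herm: "top_shift\<^sup>H = top_shift"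
    unfolding top_shift_def mat_adjoint_mat_diag by (rule arg_cong[of _ _ "mat_diag n"]) auto
  \<comment> \<open>In the adjoint the weights become row norms of U^H G, and the first k of them add up to
    the squared norm of G Ps.\<close>
  have "frob_sq (G * (U * (top_shift * (U\<^sup>H * P)))) = frob_sq ((G * (U * (top_shift * (U\<^sup>H * P))))\<^sup>H)"
    by simp
  also have "(G * (U * (top_shift * (U\<^sup>H * P))))\<^sup>H = P\<^sup>H * (U * (top_shift * (U\<^sup>H * G)))"
    using G carrier_matD[OF shift_carrier(1)]
    by (simp add: mat_adjoint_mult assoc_mult_mat_dim G_herm D_herm)
  also have "frob_sq \<dots> \<le> frob_sq (top_shift * (U\<^sup>H * G))"
    using frob_sq_complement_le(2)[OF P mult_carrier_mat[OF Uc mult_carrier_mat[OF shift_carrier(1) UG]]]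
    by (simp add: frob_sq_isometry_mult[OF U] carrier_matD[OF shift_carrier(1)])
  also have "\<dots> \<le> (\<Sum>i<n. (if i < k then ?\<alpha> else 0)\<^sup>2 * row_norm_sq (U\<^sup>H * G) i)"
    unfolding top_shift_def
  proof (intro frob_sq_mat_diag_mult_le[OF UG])
    fix i assume i: "i < n"
    show "cmod (if i < k then complex_of_real (lam i - lam (k - 1)) else 0) \<le> (if i < k then ?\<alpha> else 0)"
    proof (cases "i < k")
      case True
      then have "lam (k - 1) \<le> lam i" "lam i \<le> lam 0"
        using lam_antimono[of i "k - 1"] lam_antimono[of 0 i] i k by auto
      then show ?thesis
        using True by (simp del: of_real_diff)
    qed simp
  qed
  also have "\<dots> = (\<Sum>i<n. if i < k then ?\<alpha>\<^sup>2 * row_norm_sq (U\<^sup>H * G) i else 0)"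
    by (intro sum.cong) auto
  also have "\<dots> = ?\<alpha>\<^sup>2 * (\<Sum>i<k. row_norm_sq (U\<^sup>H * G) i)"
    using k by (simp add: sum_lessThan_if_less sum_distrib_left)
  also have "(\<Sum>i<k. row_norm_sq (U\<^sup>H * G) i) = frob_sq (G * Ps)"
    using sum_top_row_norm_sq[OF G] Psc G
    by (metis frob_sq_adjoint G_herm mat_adjoint_mult carrier_matD(2) dims(5))
  also have "\<dots> = real k - frob_sq (P\<^sup>H * Ps)"
    using frob_sq_complement[OF P Psc] frob_sq_isometry[OF Ps] unfolding G_def by linarith
  finally show ?thesis
    unfolding G_def .
qed

lemma residual_bound:
  "frob_norm (H * P - P * (P\<^sup>H * H * P)) \<le> (lam 0 - lam (n - 1)) * sqrt (real k - frob_sq (P\<^sup>H * Ps))"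
proof -
  let ?G = "1\<^sub>m n - P * P\<^sup>H" and ?Y = "U\<^sup>H * P" and ?s = "real k - frob_sq (P\<^sup>H * Ps)"
  have Uc: "U \<in> carrier_mat n n" and Pc: "P \<in> carrier_mat n k"
    using isometry_matD[OF U] isometry_matD[OF P] by auto
  have G: "?G \<in> carrier_mat n n"
    using minus_carrier_mat[OF mult_carrier_mat[OF Pc mat_adjoint_carrier[OF Pc]]] .
  have Y: "?Y \<in> carrier_mat n k"
    using mult_carrier_mat[OF mat_adjoint_carrier[OF Uc] Pc] .
  have "frob_norm (H * P - P * (P\<^sup>H * H * P))
      \<le> frob_norm (?G * (U * (top_shift * ?Y))) + frob_norm (?G * (U * (bottom_shift * ?Y)))"
    unfolding residual_split
    using mult_carrier_mat[OF G mult_carrier_mat[OF Uc mult_carrier_mat[OF shift_carrier(1) Y]]]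
      mult_carrier_mat[OF G mult_carrier_mat[OF Uc mult_carrier_mat[OF shift_carrier(2) Y]]]
    by (rule frob_norm_triangle)
  also have "\<dots> \<le> (lam 0 - lam (k - 1)) * sqrt ?s + (lam (k - 1) - lam (n - 1)) * sqrt ?s"
    using frob_norm_le_of_frob_sq_le[OF frob_sq_residual_top_le]
      frob_norm_le_of_frob_sq_le[OF frob_sq_residual_bottom_le]
      lam_antimono[of 0 "k - 1"] lam_antimono[of "k - 1" "n - 1"] k
    by (simp add: add_mono)
  also have "\<dots> = (lam 0 - lam (n - 1)) * sqrt ?s"
    by (simp add: left_diff_distrib)
  finally show ?thesis .
qed

end

end

theorem theorem3p1:
  fixes H Ps P :: "complex mat" and n k :: nat
  assumes H: "H \<in> carrier_mat n n" and herm: "mat_adjoint H = H"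
    and k: "1 \<le> k" "k < n"
    and gap: "eig_desc H ! (k - 1) - eig_desc H ! k > 0"
    and Ps: "Ps \<in> carrier_mat n k" "mat_adjoint Ps * Ps = 1\<^sub>m k"
    and inv: "\<exists>M \<in> carrier_mat k k. H * Ps = Ps * M \<and>
                 proots (char_poly M) = mset (map complex_of_real (take k (eig_desc H)))"
    and P: "P \<in> carrier_mat n k" "mat_adjoint P * P = 1\<^sub>m k"
  shows "let \<eta> = Re (mat_trace (mat_adjoint Ps * H * Ps) - mat_trace (mat_adjoint P * H * P));
             \<epsilon> = sqrt (\<eta> / (eig_desc H ! (k - 1) - eig_desc H ! k))
         in frob_norm (H * P - P * (mat_adjoint P * H * P)) / (eig_desc H ! 0 - eig_desc H ! (n - 1))
              \<le> sin_theta_F P Ps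
            \<and> sin_theta_F P Ps \<le> \<epsilon>"
proof -
  let ?L = "eig_desc H"
  have Ps': "isometry_mat n k Ps" and P': "isometry_mat n k P"
    using Ps P by (simp_all add: isometry_mat_def)
  have len: "length ?L = n"
    by (rule hermitian_eig_desc(1)[OF H herm])
  obtain U where U: "isometry_mat n n U"
    and HU: "H * U = U * mat_diag n (\<lambda>i. complex_of_real (?L ! i))"
    using hermitian_eig_desc_diagonalization[OF H herm] by blast
  obtain M where M: "M \<in> carrier_mat k k" and HPs: "H * Ps = Ps * M"
    and roots: "proots (char_poly M) = mset (map complex_of_real (take k ?L))"
    using inv by blast
  have "Ps * Ps\<^sup>H = U * mat_diag n (\<lambda>i. if i < k then 1 else 0) * U\<^sup>H"
    using invariant_subspace_projection[OF H herm U HU Ps' M HPs] k gap len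
      not_eigenvalue_below_gap[OF M roots eig_desc_antimono]
    by auto
  then interpret dominant_eigenspace n k H U Ps "\<lambda>i. ?L ! i"
    using H U HU eig_desc_antimono len k Ps' by unfold_locales auto
  have "0 < ?L ! 0 - ?L ! (n - 1)"
    using gap lam_antimono[of 0 "k - 1"] lam_antimono[of k "n - 1"] k by linarith
  then show ?thesis
    using residual_bound[OF P'] trace_gap_lower_bound[OF P'] gap
    by (auto simp: Let_def sin_theta_F_eq[OF P' Ps'] pos_divide_le_eq pos_le_divide_eq mult.commute
        intro: real_sqrt_le_mono)
qed

end
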